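(* Let $G_0,G_1\in\mathbb{Z}$ with $\gcd(G_0,G_1)=1$, let $(G_n)_{n\ge0}$ satisfy $G_n=G_{n-1}+G_{n-2}$ for $n\ge2$, and let $\mu = G_1^2 - G_0 G_1 - G_0^2$. For every even integer $k \geq 1$ (i.e. $k\ge 2$ even), $$\mathcal{G}^2_{G_0,G_1}(k) = \begin{cases} F_k, & \text{if $5$ does not divide $\mu$},\\ 5 F_k, & \text{if $5$ divides $\mu$},\end{cases}$$ where $F_k$ is the $k$-th Fibonacci number.
   Context: $\mathcal{G}^2_{G_0,G_1}(k)=\gcd\{\sum_{i=1}^k G_{n+i}^2 : n\ge 0\}$ (nonnegative gcd of this infinite set). $F_0=0$, $F_1=1$, $F_n=F_{n-1}+F_{n-2}$. *)

theory Defs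
  imports "HOL-Number_Theory.Fib"
begin

text \<open>The gcd of the infinite set of sums of k consecutive squares
  G_{n+1}^2 + ... + G_{n+k}^2, n \<ge> 0. Gcd on int is nonnegative (normalized).\<close>
definition sqsum_gcd :: "(nat \<Rightarrow> int) \<Rightarrow> nat \<Rightarrow> int" where
  "sqsum_gcd G k = Gcd {(\<Sum>i=1..k. (G (n+i))^2) | n. True}"

end

theory Submission
  imports Defs "HOL-Computational_Algebra.Primes"
begin

text \<open>
  Write \<open>P m = G m\<^sup>2 + G (m+1)\<^sup>2\<close>. For even \<open>k = 2(t+1)\<close> the squares telescope,
  \<open>G i\<^sup>2 = G i G (i+1) - G (i-1) G i\<close>, and after expressing everything through
  \<open>G n, G (n+1)\<close> with Fibonacci coefficients, Cassini's identity gives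
  \<open>G (n+1)\<^sup>2 + \<dots> + G (n+k)\<^sup>2 = F k \<cdot> P (n+t+1)\<close>.
  Since \<open>P (m+2) = 3 P (m+1) - P m\<close>, the gcd of two consecutive \<open>P m\<close> never changes,
  so every tail of \<open>P\<close> has gcd \<open>gcd (P 0) (P 1)\<close>. For coprime \<open>x = G 0\<close>, \<open>y = G 1\<close>
  this is \<open>gcd 5 (2x + y)\<close>, and \<open>y\<^sup>2 - xy - x\<^sup>2 \<equiv> (2x + y)\<^sup>2 (mod 5)\<close>.
\<close>

lemma fib_Cassini_form:
  "of_nat (fib (Suc t)) ^ 2 - of_nat (fib t) * of_nat (fib (Suc t)) - of_nat (fib t) ^ 2
     = ((-1) ^ t :: 'a::comm_ring_1)"
proof -
  have "int (fib (Suc t)) ^ 2 - int (fib t) * int (fib (Suc t)) - int (fib t) ^ 2 = (-1) ^ t"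
    using fib_Cassini_int[of t] by (simp add: algebra_simps power2_eq_square)
  from arg_cong[where f = "of_int :: int \<Rightarrow> 'a", OF this] show ?thesis
    by simp
qed

locale fib_like =
  fixes G :: "nat \<Rightarrow> 'a::comm_ring_1"
  assumes G_Suc_Suc: "G (Suc (Suc n)) = G (Suc n) + G n"
begin

definition pair_sqsum :: "nat \<Rightarrow> 'a" where
  "pair_sqsum m = G m ^ 2 + G (Suc m) ^ 2"

lemma G_add_fib: "G (m + Suc r) = of_nat (fib r) * G m + of_nat (fib (Suc r)) * G (Suc m)"
proof (induction r rule: fib.induct)
  case 1
  show ?case by simp
next
  case 2
  show ?case using G_Suc_Suc[of m] by simp
next
  case (3 r)
  have "G (m + Suc (Suc (Suc r))) = G (m + Suc (Suc r)) + G (m + Suc r)"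
    using G_Suc_Suc[of "m + Suc r"] by simp
  with 3 show ?case by (simp add: algebra_simps)
qed

lemma sum_squares_telescope:
  "(\<Sum>i=1..k. G (n + i) ^ 2) = G (n + k) * G (n + Suc k) - G n * G (Suc n)"
proof (induction k)
  case 0
  show ?case by simp
next
  case (Suc k)
  have "G (n + Suc (Suc k)) = G (n + Suc k) + G (n + k)"
    using G_Suc_Suc[of "n + k"] by simp
  with Suc show ?case by (simp add: power2_eq_square algebra_simps)
qed

lemma pair_sqsum_Suc_Suc: "pair_sqsum (Suc (Suc m)) = 3 * pair_sqsum (Suc m) - pair_sqsum m"
  using G_Suc_Suc[of m] G_Suc_Suc[of "Suc m"]
  by (simp add: pair_sqsum_def power2_eq_square algebra_simps)

lemma sum_squares_even_length:
  "(\<Sum>i=1..2 * Suc t. G (n + i) ^ 2) = of_nat (fib (2 * Suc t)) * pair_sqsum (n + Suc t)"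
proof -
  define x y where "x = G n" and "y = G (Suc n)"
  define c d where "c = (of_nat (fib t) :: 'a)" and "d = (of_nat (fib (Suc t)) :: 'a)"
  have fib_odd: "of_nat (fib (Suc (2 * t))) = c ^ 2 + d ^ 2"
    unfolding c_def d_def by (simp add: fib_rec_odd)
  have fib_even: "of_nat (fib (2 * Suc t)) = d * (2 * c + d)"
    unfolding c_def d_def by (simp only: fib_rec_even') (simp add: algebra_simps)
  have Cassini: "(d ^ 2 - c * d - c ^ 2) ^ 2 = 1"
    unfolding c_def d_def fib_Cassini_form by (simp flip: power_mult add: mult.commute)
  have "G (n + 2 * Suc t) = (c ^ 2 + d ^ 2) * x + d * (2 * c + d) * y"
    using G_add_fib[of n "Suc (2 * t)"] fib_odd fib_even by (simp add: x_def y_def)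
  moreover have "G (n + Suc (2 * Suc t)) = d * (2 * c + d) * x + (c ^ 2 + d ^ 2 + d * (2 * c + d)) * y"
  proof -
    have "of_nat (fib (Suc (2 * Suc t))) = (of_nat (fib (Suc (2 * t))) + of_nat (fib (2 * Suc t)) :: 'a)"
      by simp
    then show ?thesis
      using G_add_fib[of n "2 * Suc t"] unfolding fib_odd fib_even x_def y_def by simp
  qed
  moreover have "G (n + Suc t) = c * x + d * y"
    using G_add_fib[of n t] by (simp add: x_def y_def c_def d_def)
  moreover have "G (Suc (n + Suc t)) = d * x + (c + d) * y"
    using G_add_fib[of n "Suc t"] by (simp add: x_def y_def c_def d_def add.commute)
  ultimately have "(\<Sum>i=1..2 * Suc t. G (n + i) ^ 2) - of_nat (fib (2 * Suc t)) * pair_sqsum (n + Suc t)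
      = x * y * ((d ^ 2 - c * d - c ^ 2) ^ 2 - 1)"
    unfolding sum_squares_telescope pair_sqsum_def fib_even x_def[symmetric] y_def[symmetric]
    by (simp add: algebra_simps power2_eq_square)
  then show ?thesis using Cassini by simp
qed

end

locale fib_like_gcd = fib_like G for G :: "nat \<Rightarrow> 'a::{ring_gcd, semiring_Gcd}"
begin

lemma gcd_pair_sqsum_Suc:
  "gcd (pair_sqsum (Suc m)) (pair_sqsum (Suc (Suc m))) = gcd (pair_sqsum m) (pair_sqsum (Suc m))"
proof -
  have "gcd (pair_sqsum (Suc m)) (pair_sqsum (Suc (Suc m)))
      = gcd (pair_sqsum (Suc m)) (3 * pair_sqsum (Suc m) + - pair_sqsum m)"
    by (simp add: pair_sqsum_Suc_Suc)
  also have "\<dots> = gcd (pair_sqsum m) (pair_sqsum (Suc m))"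
    by (simp only: gcd_add_mult gcd_neg1 gcd_neg2 gcd.commute)
  finally show ?thesis .
qed

lemma gcd_pair_sqsum: "gcd (pair_sqsum m) (pair_sqsum (Suc m)) = gcd (pair_sqsum 0) (pair_sqsum 1)"
  by (induction m) (simp_all add: gcd_pair_sqsum_Suc)

lemma Gcd_pair_sqsum_from:
  "Gcd (range (\<lambda>n. pair_sqsum (n + s))) = gcd (pair_sqsum 0) (pair_sqsum 1)"
proof (rule associated_eqI)
  have "Gcd (range (\<lambda>n. pair_sqsum (n + s))) dvd pair_sqsum (n + s)" for n
    by (rule Gcd_dvd) simp
  from this[of 0] this[of 1]
  have "Gcd (range (\<lambda>n. pair_sqsum (n + s))) dvd gcd (pair_sqsum s) (pair_sqsum (Suc s))"
    by simp
  then show "Gcd (range (\<lambda>n. pair_sqsum (n + s))) dvd gcd (pair_sqsum 0) (pair_sqsum 1)"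
    by (simp only: gcd_pair_sqsum)
  have "gcd (pair_sqsum 0) (pair_sqsum 1) dvd pair_sqsum m" for m
    using gcd_dvd1[of "pair_sqsum m" "pair_sqsum (Suc m)"] by (simp only: gcd_pair_sqsum)
  then show "gcd (pair_sqsum 0) (pair_sqsum 1) dvd Gcd (range (\<lambda>n. pair_sqsum (n + s)))"
    by (auto intro: Gcd_greatest)
qed simp_all

end

lemma coprime_sum_squares_right:
  fixes x y :: int
  assumes "coprime x y"
  shows "coprime (x ^ 2 + y ^ 2) y"
proof -
  have "gcd y (y * y + x ^ 2) = gcd y (x ^ 2)"
    by (rule gcd_add_mult)
  moreover have "coprime y (x ^ 2)"
    using assms by (simp add: coprime_commute)
  ultimately show ?thesis
    by (simp add: coprime_iff_gcd_eq_1 gcd.commute power2_eq_square add.commute)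
qed

lemma gcd_sum_squares_next:
  fixes x y :: int
  assumes "coprime x y"
  shows "gcd (x ^ 2 + y ^ 2) (y ^ 2 + (x + y) ^ 2) = gcd 5 (2 * x + y)"
proof (rule associated_eqI)
  define d where "d = gcd (x ^ 2 + y ^ 2) (y ^ 2 + (x + y) ^ 2)"
  have sum_next: "y ^ 2 + (x + y) ^ 2 = (x ^ 2 + y ^ 2) + y * (2 * x + y)"
    and five_x: "(x ^ 2 + y ^ 2) + (2 * x + y) * (2 * x - y) = 5 * x ^ 2"
    and five_y: "4 * (x ^ 2 + y ^ 2) - (2 * x + y) * (2 * x - y) = 5 * y ^ 2"
    by (simp_all add: power2_eq_square algebra_simps)
  have d_dvd_sum: "d dvd x ^ 2 + y ^ 2"
    unfolding d_def by (rule gcd_dvd1)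
  have "d dvd y ^ 2 + (x + y) ^ 2"
    unfolding d_def by (rule gcd_dvd2)
  then have "d dvd y * (2 * x + y)"
    using d_dvd_sum unfolding sum_next by (simp add: dvd_add_right_iff)
  moreover have "coprime d y"
    using d_dvd_sum dvd_refl coprime_sum_squares_right[OF assms] by (rule coprime_divisors)
  ultimately have d_dvd: "d dvd 2 * x + y"
    using coprime_dvd_mult_right_iff by blast
  have "d dvd 5 * x ^ 2"
    unfolding five_x[symmetric] by (rule dvd_add[OF d_dvd_sum dvd_mult2[OF d_dvd]])
  moreover have "d dvd 5 * y ^ 2"
    unfolding five_y[symmetric] by (rule dvd_diff[OF dvd_mult[OF d_dvd_sum] dvd_mult2[OF d_dvd]])
  ultimately have "d dvd gcd (5 * x ^ 2) (5 * y ^ 2)"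
    by (rule gcd_greatest)
  also have "gcd (5 * x ^ 2) (5 * y ^ 2) = 5"
    using assms by (simp add: gcd_mult_left coprime_iff_gcd_eq_1[symmetric])
  finally show "d dvd gcd 5 (2 * x + y)"
    using d_dvd by (rule gcd_greatest)
  have "gcd 5 (2 * x + y) dvd 5 * x ^ 2 - (2 * x + y) * (2 * x - y)"
    by (rule dvd_diff[OF dvd_mult2[OF gcd_dvd1] dvd_mult2[OF gcd_dvd2]])
  then have g_dvd_sum: "gcd 5 (2 * x + y) dvd x ^ 2 + y ^ 2"
    by (simp flip: five_x)
  have "gcd 5 (2 * x + y) dvd y ^ 2 + (x + y) ^ 2"
    unfolding sum_next by (rule dvd_add[OF g_dvd_sum dvd_mult[OF gcd_dvd2]])
  with g_dvd_sum show "gcd 5 (2 * x + y) dvd d"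
    unfolding d_def by (rule gcd_greatest)
qed simp_all

lemma gcd_five_eq:
  fixes x y :: int
  shows "gcd 5 (2 * x + y) = (if 5 dvd (y ^ 2 - x * y - x ^ 2) then 5 else 1)"
proof -
  have prime5: "prime (5::int)" by simp
  have "(2 * x + y) ^ 2 = (y ^ 2 - x * y - x ^ 2) + 5 * (x ^ 2 + x * y)"
    by (simp add: power2_eq_square algebra_simps)
  then have "5 dvd (2 * x + y) ^ 2 \<longleftrightarrow> 5 dvd (y ^ 2 - x * y - x ^ 2)"
    by (simp only: dvd_add_left_iff dvd_triv_left)
  then have "5 dvd (y ^ 2 - x * y - x ^ 2) \<longleftrightarrow> 5 dvd (2 * x + y)"
    using prime_dvd_power_iff[OF prime5, of 2] by simp
  moreover have "\<not> 5 dvd (2 * x + y) \<Longrightarrow> gcd 5 (2 * x + y) = 1"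
    using prime_imp_coprime[OF prime5] by (simp add: coprime_iff_gcd_eq_1)
  ultimately show ?thesis by auto
qed

theorem theorem4p7:
  fixes G :: "nat \<Rightarrow> int" and k :: nat
  assumes cop: "gcd (G 0) (G 1) = 1"
    and rec: "\<And>n. n \<ge> 2 \<Longrightarrow> G n = G (n - 1) + G (n - 2)"
    and keven: "even k" and kpos: "k \<ge> 1"
  shows "sqsum_gcd G k =
    (if (5::int) dvd ((G 1)^2 - G 0 * G 1 - (G 0)^2) then 5 * int (fib k) else int (fib k))"
proof -
  interpret fib_like_gcd G
    by unfold_locales (use rec[of "Suc (Suc _)"] in simp)
  obtain t where k: "k = 2 * Suc t"
    using keven kpos by (metis dvd_def mult_0_right not0_implies_Suc not_one_le_zero)
  have "{(\<Sum>i=1..k. (G (n + i))^2) | n. True} = (*) (int (fib k)) ` range (\<lambda>n. pair_sqsum (n + Suc t))"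
    unfolding k sum_squares_even_length by auto
  then have "sqsum_gcd G k = Gcd ((*) (int (fib k)) ` range (\<lambda>n. pair_sqsum (n + Suc t)))"
    unfolding sqsum_gcd_def by (rule arg_cong)
  also have "\<dots> = int (fib k) * gcd (pair_sqsum 0) (pair_sqsum 1)"
    by (simp only: Gcd_mult Gcd_pair_sqsum_from) (simp add: abs_mult)
  also have "gcd (pair_sqsum 0) (pair_sqsum 1) = gcd 5 (2 * G 0 + G 1)"
    using gcd_sum_squares_next[of "G 0" "G 1"] cop G_Suc_Suc[of 0]
    by (simp add: pair_sqsum_def coprime_iff_gcd_eq_1 add.commute)
  finally show ?thesis
    by (simp add: gcd_five_eq)
qed

end
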